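(* Inner p-transitivity fails in general: there exist a language $L$, an $L$-algebra $\mathfrak A$ with universe $A$, and elements $a,b,c,d,e,f\in A$ such that $a:b\approx_{\mathfrak A}c:d$ and $b:e\approx_{\mathfrak A}d:f$ hold, but $a:e\approx_{\mathfrak A}c:f$ does not hold.
   Context: Let $L$ be a language of algebras: a set of function symbols, each with an arity in $\mathbb N$ (constants are 0-ary function symbols). Fix a countably infinite set $X$ of variables; $T_{L,X}$ is the set of $L$-terms over $X$, and $X(s)$ denotes the set of variables occurring in a term $s$. For an $L$-algebra $\mathfrak A$ with universe $A$, every term $s$ induces a function $s^{\mathfrak A}$, evaluated at assignments of elements of $A$ to variables. An arrow of $\mathfrak A$ is a pair $(a,b)\in A\times A$, written $a\to b$. The generalizations of an arrow $a\to b$ in $\mathfrak A$ are the pairs of arbitrary terms $s\to t$ with $s,t\in T_{L,X}$ such that there is an assignment $\sigma$ of elements of $A$ to the variables in $X(s)\cup X(t)$ with $s^{\mathfrak A}(\sigma)=a$ and $t^{\mathfrak A}(\sigma)=b$; their set is denoted $\uparrow_{\mathfrak A}(a\to b)$. For $L$-algebras $\mathfrak A,\mathfrak B$, an arrow $a\to b$ of $\mathfrak A$ and an arrow $c\to d$ of $\mathfrak B$, set $(a\to b)\uparrow_{(\mathfrak A,\mathfrak B)}(c\to d):=\uparrow_{\mathfrak A}(a\to b)\cap\uparrow_{\mathfrak B}(c\to d)$. A pair of terms $s\to t$ is trivial in $(\mathfrak A,\mathfrak B)$ if it belongs to $\uparrow_{\mathfrak A}(e)$ for every arrow $e$ of $\mathfrak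 A$ and to $\uparrow_{\mathfrak B}(e')$ for every arrow $e'$ of $\mathfrak B$. We write $a\to b\lesssim_{(\mathfrak A,\mathfrak B)}c\to d$ iff either (i) every element of $\uparrow_{\mathfrak A}(a\to b)\cup\uparrow_{\mathfrak B}(c\to d)$ is trivial in $(\mathfrak A,\mathfrak B)$, or (ii) $(a\to b)\uparrow_{(\mathfrak A,\mathfrak B)}(c\to d)$ contains an element not trivial in $(\mathfrak A,\mathfrak B)$ and, for every arrow $c'\to d'$ of $\mathfrak B$, the inclusion $(a\to b)\uparrow_{(\mathfrak A,\mathfrak B)}(c\to d)\subseteq(a\to b)\uparrow_{(\mathfrak A,\mathfrak B)}(c'\to d')$ implies equality of these two sets. Define $a\to b\approx_{(\mathfrak A,\mathfrak B)}c\to d$ iff $a\to b\lesssim_{(\mathfrak A,\mathfrak B)}c\to d$ and $c\to d\lesssim_{(\mathfrak B,\mathfrak A)}a\to b$. For $a,b\in A$ and $c,d\in B$, the similarity-based analogical proportion $a:b\approx_{(\mathfrak A,\mathfrak B)}c:d$ holds iff $a\to b\approx_{(\mathfrak A,\mathfrak B)}c\to d$ and $b\to a\approx_{(\mathfrak A,\mathfrak B)}d\to c$. We write $\approx_{\mathfrak A}$ for $\approx_{(\mathfrak A,\mathfrak A)}$. *)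

theory Defs
  imports Main
begin

datatype ('f, 'v) trm = Var 'v | Fun 'f "('f, 'v) trm list"

fun wf_trm :: "'f set \<Rightarrow> ('f \<Rightarrow> nat) \<Rightarrow> ('f, 'v) trm \<Rightarrow> bool" where
  "wf_trm F ar (Var x) = True"
| "wf_trm F ar (Fun f ts) = (f \<in> F \<and> length ts = ar f \<and> (\<forall>t\<in>set ts. wf_trm F ar t))"

fun vars_trm :: "('f, 'v) trm \<Rightarrow> 'v set" where
  "vars_trm (Var x) = {x}"
| "vars_trm (Fun f ts) = (\<Union>t\<in>set ts. vars_trm t)"

fun eval_trm :: "('f \<Rightarrow> 'a list \<Rightarrow> 'a) \<Rightarrow> ('v \<Rightarrow> 'a) \<Rightarrow> ('f, 'v) trm \<Rightarrow> 'a" where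
  "eval_trm I \<sigma> (Var x) = \<sigma> x"
| "eval_trm I \<sigma> (Fun f ts) = I f (map (eval_trm I \<sigma>) ts)"

definition is_algebra :: "'f set \<Rightarrow> ('f \<Rightarrow> nat) \<Rightarrow> 'a set \<Rightarrow> ('f \<Rightarrow> 'a list \<Rightarrow> 'a) \<Rightarrow> bool" where
  "is_algebra F ar A I \<longleftrightarrow> A \<noteq> {} \<and>
     (\<forall>f\<in>F. \<forall>xs. length xs = ar f \<and> set xs \<subseteq> A \<longrightarrow> I f xs \<in> A)"

text \<open>Variables: the countably infinite set nat.\<close>

definition gens :: "'f set \<Rightarrow> ('f \<Rightarrow> nat) \<Rightarrow> 'a set \<Rightarrow> ('f \<Rightarrow> 'a list \<Rightarrow> 'a)
    \<Rightarrow> 'a \<times> 'a \<Rightarrow> (('f, nat) trm \<times> ('f, nat) trm) set" where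
  "gens F ar A I ab = {(s, t). wf_trm F ar s \<and> wf_trm F ar t \<and>
     (\<exists>\<sigma>. (\<forall>x \<in> vars_trm s \<union> vars_trm t. \<sigma> x \<in> A) \<and>
          eval_trm I \<sigma> s = fst ab \<and> eval_trm I \<sigma> t = snd ab)}"

definition gens2 where
  "gens2 F ar A I B J ab cd = gens F ar A I ab \<inter> gens F ar B J cd"

definition trivial_pair where
  "trivial_pair F ar A I B J st \<longleftrightarrow>
     (\<forall>e \<in> A \<times> A. st \<in> gens F ar A I e) \<and> (\<forall>e \<in> B \<times> B. st \<in> gens F ar B J e)"

definition arrow_le where
  "arrow_le F ar A I B J ab cd \<longleftrightarrow>
     (\<forall>st \<in> gens F ar A I ab \<union> gens F ar B J cd. trivial_pair F ar A I B J st)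
   \<or> ((\<exists>st \<in> gens2 F ar A I B J ab cd. \<not> trivial_pair F ar A I B J st) \<and>
      (\<forall>cd' \<in> B \<times> B. gens2 F ar A I B J ab cd \<subseteq> gens2 F ar A I B J ab cd'
          \<longrightarrow> gens2 F ar A I B J ab cd = gens2 F ar A I B J ab cd'))"

definition arrow_approx where
  "arrow_approx F ar A I B J ab cd \<longleftrightarrow>
     arrow_le F ar A I B J ab cd \<and> arrow_le F ar B J A I cd ab"

definition analog_prop where
  "analog_prop F ar A I B J a b c d \<longleftrightarrow>
     arrow_approx F ar A I B J (a, b) (c, d) \<and> arrow_approx F ar A I B J (b, a) (d, c)"

end

theory Submission
  imports Defs
begin

text \<open>In the empty language every term is a variable, so the generalizations of an arrow
  \<open>a \<rightarrow> b\<close> are the pairs of variables \<open>x \<rightarrow> y\<close>, with \<open>x \<noteq> y\<close> forced exactly when \<open>a \<noteq> b\<close>.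
  Pairs of distinct variables generalize every arrow and are therefore trivial, so any two
  arrows between distinct elements are related by the first clause of \<open>\<lesssim>\<close>. On the other
  hand \<open>x \<rightarrow> x\<close> is a non-trivial generalization of \<open>a \<rightarrow> a\<close> that no arrow between distinct
  elements has, so \<open>a \<rightarrow> a \<lesssim> c \<rightarrow> d\<close> fails for \<open>c \<noteq> d\<close>. In the bare set \<open>{0, 1, 2}\<close> this
  gives \<open>0 : 1 \<approx> 0 : 1\<close> and \<open>1 : 0 \<approx> 1 : 2\<close>, but not \<open>0 : 0 \<approx> 0 : 2\<close>.\<close>

lemma wf_trm_empty_iff: "wf_trm {} ar s \<longleftrightarrow> (\<exists>x. s = Var x)"
  by (cases s) auto

lemma gens_empty_language:
  fixes ar :: "'f \<Rightarrow> nat"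
  shows "gens {} ar A I (p, q) =
     {(Var x, Var y) | x y. p \<in> A \<and> q \<in> A \<and> (x = y \<longrightarrow> p = q)}"
proof (intro set_eqI iffI)
  fix st :: "('f, nat) trm \<times> ('f, nat) trm"
  assume "st \<in> gens {} ar A I (p, q)"
  then obtain s t \<sigma> where st: "st = (s, t)" "wf_trm {} ar s" "wf_trm {} ar t"
      "\<forall>x \<in> vars_trm s \<union> vars_trm t. \<sigma> x \<in> A" "eval_trm I \<sigma> s = p" "eval_trm I \<sigma> t = q"
    unfolding gens_def by auto
  then obtain x y where "s = Var x" "t = Var y" by (auto simp: wf_trm_empty_iff)
  with st show "st \<in> {(Var x, Var y) | x y. p \<in> A \<and> q \<in> A \<and> (x = y \<longrightarrow> p = q)}"
    by auto
next
  fix st :: "('f, nat) trm \<times> ('f, nat) trm"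
  assume "st \<in> {(Var x, Var y) | x y. p \<in> A \<and> q \<in> A \<and> (x = y \<longrightarrow> p = q)}"
  then obtain x y where st: "st = (Var x, Var y)" "p \<in> A" "q \<in> A" "x = y \<longrightarrow> p = q"
    by auto
  then show "st \<in> gens {} ar A I (p, q)"
    unfolding gens_def by (auto intro!: exI[of _ "\<lambda>z. if z = x then p else q"])
qed

lemma trivial_pair_Var_Var_distinct:
  assumes "x \<noteq> y"
  shows "trivial_pair {} ar A I B J (Var x, Var y)"
  using assms unfolding trivial_pair_def by (auto simp: gens_empty_language)

lemma trivial_pair_empty_languageE:
  assumes "trivial_pair {} ar A I B J st" and "p \<in> A" "q \<in> A" "p \<noteq> q"
  obtains x y where "st = (Var x, Var y)" "x \<noteq> y"
proof -
  have "st \<in> gens {} ar A I (p, q)"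
    using assms unfolding trivial_pair_def by blast
  with \<open>p \<noteq> q\<close> show thesis
    using that unfolding gens_empty_language by auto
qed

lemma arrow_le_empty_language_distinct:
  assumes "a \<noteq> b" "c \<noteq> d"
  shows "arrow_le {} ar A I B J (a, b) (c, d)"
  using assms unfolding arrow_le_def
  by (auto simp: gens_empty_language intro: trivial_pair_Var_Var_distinct)

lemma not_arrow_le_empty_language_refl_distinct:
  assumes "p \<in> A" "q \<in> A" "p \<noteq> q" and "a \<in> A" "c \<noteq> d"
  shows "\<not> arrow_le {} ar A I B J (a, a) (c, d)"
proof -
  have "(Var 0, Var 0) \<in> gens {} ar A I (a, a)"
    using \<open>a \<in> A\<close> unfolding gens_empty_language by blast
  moreover have "\<not> trivial_pair {} ar A I B J (Var 0, Var 0)"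
    using assms(1-3) by (auto elim: trivial_pair_empty_languageE)
  moreover have "trivial_pair {} ar A I B J st"
    if "st \<in> gens2 {} ar A I B J (a, a) (c, d)" for st
    using that \<open>c \<noteq> d\<close> unfolding gens2_def gens_empty_language
    by (auto intro: trivial_pair_Var_Var_distinct)
  ultimately show ?thesis
    unfolding arrow_le_def by blast
qed

lemma analog_prop_empty_language_distinct:
  assumes "a \<noteq> b" "c \<noteq> d"
  shows "analog_prop {} ar A I B J a b c d"
  using assms unfolding analog_prop_def arrow_approx_def
  by (auto intro: arrow_le_empty_language_distinct)

lemma not_analog_prop_empty_language_refl_distinct:
  assumes "p \<in> A" "q \<in> A" "p \<noteq> q" and "a \<in> A" "c \<noteq> d"
  shows "\<not> analog_prop {} ar A I B J a a c d"
  using not_arrow_le_empty_language_refl_distinct[OF assms]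
  unfolding analog_prop_def arrow_approx_def by blast

theorem theorem3:
  shows "\<exists>(F :: nat set) (ar :: nat \<Rightarrow> nat) (A :: nat set) (I :: nat \<Rightarrow> nat list \<Rightarrow> nat)
           a b c d e f.
     is_algebra F ar A I \<and> a \<in> A \<and> b \<in> A \<and> c \<in> A \<and> d \<in> A \<and> e \<in> A \<and> f \<in> A \<and>
     analog_prop F ar A I A I a b c d \<and> analog_prop F ar A I A I b e d f \<and>
     \<not> analog_prop F ar A I A I a e c f"
proof -
  let ?A = "{0, 1, 2 :: nat}" and ?ar = "\<lambda>_ :: nat. 0 :: nat"
    and ?I = "\<lambda>(_ :: nat) (_ :: nat list). 0 :: nat"
  have "is_algebra {} ?ar ?A ?I"
    by (simp add: is_algebra_def)
  moreover have "analog_prop {} ?ar ?A ?I ?A ?I 0 1 0 1"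
    by (rule analog_prop_empty_language_distinct) simp_all
  moreover have "analog_prop {} ?ar ?A ?I ?A ?I 1 0 1 2"
    by (rule analog_prop_empty_language_distinct) simp_all
  moreover have "\<not> analog_prop {} ?ar ?A ?I ?A ?I 0 0 0 2"
    by (rule not_analog_prop_empty_language_refl_distinct[of 0 _ 1]) simp_all
  ultimately show ?thesis
    by blast
qed

end
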